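(* Let $f:[a,b]\to\mathbb{R}$ be an $L$-Lipschitz convex function, and let $f(x^* )=\min_{x\in[a,b]}f(x)$. Set $x_1=\frac{3a+b}{4}$, $x_2=\frac{a+b}{2}$, $x_3=\frac{a+3b}{4}$. Suppose there exist constants $A\in\mathbb{R}$ and $\Delta>0$ such that $f(x_i)\in[A-\Delta,A+\Delta]$ for $i=1,2,3$. Then $$\max\{f(x_1),f(x_2),f(x_3)\}-f(x^* )\le4\Delta.$$ *)

theory Defs
  imports "HOL-Analysis.Analysis"
begin

end

theory Submission
  imports Defs
begin

(* Every point x of [a,b] has a quartile point p between itself and a neighbouring quartile point q,
   with |x - p| <= |p - q|. Extrapolating the chord from q through p, convexity gives
   f x >= min (f p) (2 f p - f q) >= A - 3 Delta, while each of the three values is at most A + Delta. *)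

lemma convex_on_ge_min_extrapolation:
  fixes f :: "'a::real_normed_vector \<Rightarrow> real"
  assumes "convex_on S f" "x \<in> S" "q \<in> S"
    and "p \<in> closed_segment x q" "dist x p \<le> dist p q"
  shows "min (f p) (2 * f p - f q) \<le> f x"
proof (cases "x = q")
  case True
  with assms(4) show ?thesis by simp
next
  case False
  obtain u where u: "0 \<le> u" "u \<le> 1" and p: "p = (1 - u) *\<^sub>R x + u *\<^sub>R q"
    using assms(4) by (auto simp: in_segment)
  have "x - p = u *\<^sub>R (x - q)" "p - q = (1 - u) *\<^sub>R (x - q)"
    by (simp_all add: p algebra_simps)
  then have "dist x p = u * norm (x - q)" "dist p q = (1 - u) * norm (x - q)"
    using u by (simp_all add: dist_norm)
  with assms(5) False have "u \<le> 1 / 2"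
    by (simp add: mult_le_cancel_right)
  have convex: "f p \<le> (1 - u) * f x + u * f q"
    unfolding p using convex_onD[OF assms(1)] u assms(2,3) by blast
  show ?thesis
  proof (cases "f q \<le> f p")
    case True
    then have "u * f q \<le> u * f p"
      using u by (simp add: mult_left_mono)
    then have "(1 - u) * f p \<le> (1 - u) * f x"
      using convex by (simp add: algebra_simps)
    with \<open>u \<le> 1 / 2\<close> have "f p \<le> f x" by simp
    then show ?thesis by simp
  next
    case False
    \<comment> \<open>convexity says \<open>f x - f p \<ge> u / (1 - u) * (f p - f q)\<close>, and \<open>u / (1 - u) \<le> 1\<close>\<close>
    have "(1 - 2 * u) * (f p - f q) \<le> 0"
      using False \<open>u \<le> 1 / 2\<close> by (intro mult_nonneg_nonpos) auto
    then have "(1 - u) * (2 * f p - f q) \<le> (1 - u) * f x"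
      using convex by (simp add: algebra_simps)
    with \<open>u \<le> 1 / 2\<close> have "2 * f p - f q \<le> f x" by simp
    then show ?thesis by simp
  qed
qed

lemma quartile_pair_for_extrapolation:
  fixes a b x :: real
  assumes "x \<in> {a..b}"
  obtains p q where "p \<in> {(3*a+b)/4, (a+b)/2, (a+3*b)/4}" "q \<in> {(3*a+b)/4, (a+b)/2, (a+3*b)/4}"
    "p \<in> closed_segment x q" "dist x p \<le> dist p q"
proof -
  consider "x \<le> (3*a+b)/4" | "(3*a+b)/4 \<le> x" "x \<le> (a+b)/2"
    | "(a+b)/2 \<le> x" "x \<le> (a+3*b)/4" | "(a+3*b)/4 \<le> x"
    by linarith
  then show ?thesis
  proof cases
    case 1
    with assms show ?thesis
      by (intro that[of "(3*a+b)/4" "(a+b)/2"]) (auto simp: closed_segment_eq_real_ivl dist_real_def field_simps)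
  next
    case 2
    with assms show ?thesis
      by (intro that[of "(a+b)/2" "(a+3*b)/4"]) (auto simp: closed_segment_eq_real_ivl dist_real_def field_simps)
  next
    case 3
    with assms show ?thesis
      by (intro that[of "(a+b)/2" "(3*a+b)/4"]) (auto simp: closed_segment_eq_real_ivl dist_real_def field_simps)
  next
    case 4
    with assms show ?thesis
      by (intro that[of "(a+3*b)/4" "(a+b)/2"]) (auto simp: closed_segment_eq_real_ivl dist_real_def field_simps)
  qed
qed

theorem lemma11:
  fixes f :: "real \<Rightarrow> real" and a b L A \<Delta> xstar :: real
  assumes "a < b"
    and "L-lipschitz_on {a..b} f"
    and "convex_on {a..b} f"
    and "xstar \<in> {a..b}" and "\<forall>x\<in>{a..b}. f xstar \<le> f x"
    and "\<Delta> > 0"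
    and "\<forall>x\<in>{(3*a+b)/4, (a+b)/2, (a+3*b)/4}. f x \<in> {A - \<Delta>..A + \<Delta>}"
  shows "max (f ((3*a+b)/4)) (max (f ((a+b)/2)) (f ((a+3*b)/4))) - f xstar \<le> 4 * \<Delta>"
proof -
  obtain p q where quartiles: "p \<in> {(3*a+b)/4, (a+b)/2, (a+3*b)/4}" "q \<in> {(3*a+b)/4, (a+b)/2, (a+3*b)/4}"
    and "p \<in> closed_segment xstar q" "dist xstar p \<le> dist p q"
    using quartile_pair_for_extrapolation[OF assms(4)] .
  moreover have "q \<in> {a..b}"
    using quartiles(2) assms(1) by auto
  ultimately have "min (f p) (2 * f p - f q) \<le> f xstar"
    using convex_on_ge_min_extrapolation[OF assms(3,4)] by blast
  moreover have "f p \<in> {A - \<Delta>..A + \<Delta>}" "f q \<in> {A - \<Delta>..A + \<Delta>}"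
    using quartiles assms(7) by blast+
  ultimately have "A - 3 * \<Delta> \<le> f xstar"
    by auto
  then show ?thesis
    using assms(7) by auto
qed

end
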